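(* Let $G$ be a complete tiered graph on vertex set $[n]$. For each spanning tree $T$ of $G$ let $\mathrm{act}(T)$ be the set of externally active edges of $G$ with respect to $T$ (for the lexicographic order on edges) and let $T_{\mathrm{act}}$ be the edge set $E(T)\cup\mathrm{act}(T)$. Then the elements $$Z_{G\setminus T_{\mathrm{act}}}=\prod_{e\in E(G)\setminus T_{\mathrm{act}}} z_e,\qquad T\in ST(G),$$ span the space $\mathcal S_G$.
   Context: A complete tiered graph on $[n]$ with surjective tiering $\mathbf t:[n]\to[m]$ has edge set exactly $\{\{i,j\}: i<j,\ \mathbf t(i)<\mathbf t(j)\}$. An edge $e\notin T$ is externally active with respect to the spanning tree $T$ if it is the minimal edge (in the lexicographic order on edges, edges written as $(i,j)$ with $i<j$) of the unique cycle in $T\cup\{e\}$. A subset $H\subseteq E(G)$ is slim if the graph $(V(G),E(G)\setminus H)$ is connected. For an edge $e=\{i,j\}$ with $i<j$ set $z_e=z_i-z_j\in\mathbb K[z_1,\dots,z_n]$ ($\mathbb K$ a field of characteristic $0$), and for $H\subseteq E(G)$ set $Z_H=\prod_{e\in H}z_e$. $\mathcal S_G$ is the linear subspace of $\mathbb K[z_1,\dots,z_n]$ spanned by the $Z_H$ for all slim $H\subseteq E(G)$. *)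

theory Defs
  imports Main "HOL-Library.Poly_Mapping"
begin

text \<open>Edges of graphs on vertex set [n] = {1..n} are pairs (i,j) with i < j.\<close>

definition tiered_edges :: "nat \<Rightarrow> (nat \<Rightarrow> nat) \<Rightarrow> (nat \<times> nat) set" where
  "tiered_edges n t = {(i,j). i \<in> {1..n} \<and> j \<in> {1..n} \<and> i < j \<and> t i < t j}"

definition edge_rel :: "(nat \<times> nat) set \<Rightarrow> (nat \<times> nat) set" where
  "edge_rel F = F \<union> converse F"

definition connected_on :: "nat set \<Rightarrow> (nat \<times> nat) set \<Rightarrow> bool" where
  "connected_on V F \<longleftrightarrow> (\<forall>u\<in>V. \<forall>v\<in>V. (u, v) \<in> (edge_rel F)\<^sup>*)"

definition edge_verts :: "(nat \<times> nat) set \<Rightarrow> nat set" where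
  "edge_verts C = fst ` C \<union> snd ` C"

definition is_cycle :: "(nat \<times> nat) set \<Rightarrow> bool" where
  "is_cycle C \<longleftrightarrow> C \<noteq> {} \<and> finite C \<and> connected_on (edge_verts C) C \<and>
     (\<forall>v\<in>edge_verts C. card {e\<in>C. fst e = v \<or> snd e = v} = 2)"

definition acyclic_edges :: "(nat \<times> nat) set \<Rightarrow> bool" where
  "acyclic_edges F \<longleftrightarrow> (\<forall>C\<subseteq>F. \<not> is_cycle C)"

definition spanning_tree :: "nat set \<Rightarrow> (nat \<times> nat) set \<Rightarrow> (nat \<times> nat) set \<Rightarrow> bool" where
  "spanning_tree V E T \<longleftrightarrow> T \<subseteq> E \<and> connected_on V T \<and> acyclic_edges T"

definition lex_le :: "nat \<times> nat \<Rightarrow> nat \<times> nat \<Rightarrow> bool" where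
  "lex_le e f \<longleftrightarrow> fst e < fst f \<or> (fst e = fst f \<and> snd e \<le> snd f)"

definition ext_active :: "(nat \<times> nat) set \<Rightarrow> (nat \<times> nat) set \<Rightarrow> (nat \<times> nat) \<Rightarrow> bool" where
  "ext_active E T e \<longleftrightarrow> e \<in> E \<and> e \<notin> T \<and>
     (\<exists>C. C \<subseteq> T \<union> {e} \<and> is_cycle C \<and> e \<in> C \<and> (\<forall>f\<in>C. lex_le e f))"

definition act :: "(nat \<times> nat) set \<Rightarrow> (nat \<times> nat) set \<Rightarrow> (nat \<times> nat) set" where
  "act E T = {e. ext_active E T e}"

definition slim :: "nat set \<Rightarrow> (nat \<times> nat) set \<Rightarrow> (nat \<times> nat) set \<Rightarrow> bool" where
  "slim V E H \<longleftrightarrow> H \<subseteq> E \<and> connected_on V (E - H)"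

text \<open>Multivariate polynomials K[z_1,...] as finitely supported maps from monomials
  (finitely supported exponent vectors) to coefficients.\<close>
type_synonym 'a mpoly = "(nat \<Rightarrow>\<^sub>0 nat) \<Rightarrow>\<^sub>0 'a"

definition var :: "nat \<Rightarrow> 'a::comm_ring_1 mpoly" where
  "var i = Poly_Mapping.single (Poly_Mapping.single i 1) 1"

definition const :: "'a::comm_ring_1 \<Rightarrow> 'a mpoly" where
  "const c = Poly_Mapping.single 0 c"

definition z_edge :: "nat \<times> nat \<Rightarrow> 'a::comm_ring_1 mpoly" where
  "z_edge e = var (fst e) - var (snd e)"

definition Z :: "(nat \<times> nat) set \<Rightarrow> 'a::comm_ring_1 mpoly" where
  "Z H = (\<Prod>e\<in>H. z_edge e)"

definition lin_span :: "'a::comm_ring_1 mpoly set \<Rightarrow> 'a mpoly set" where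
  "lin_span A = {p. \<exists>S c. finite S \<and> S \<subseteq> A \<and> p = (\<Sum>a\<in>S. const (c a) * a)}"

definition S_G :: "nat set \<Rightarrow> (nat \<times> nat) set \<Rightarrow> 'a::comm_ring_1 mpoly set" where
  "S_G V E = lin_span {Z H | H. slim V E H}"

end

theory Submission
  imports Defs "HOL-Library.Product_Lexorder" "HOL-Library.Transitive_Closure_Table" HOL.Modules
begin

text \<open>It suffices to show \<open>Z\<^bsub>E - Y\<^esub>\<close> lies in the span for every connected \<open>Y \<subseteq> E\<close>.
  If some edge \<open>e \<notin> Y\<close> has its endpoints joined by a path of lexicographically larger
  edges of \<open>Y\<close>, telescoping \<open>z\<^sub>e\<close> along that path writes \<open>Z\<^bsub>E - Y\<^esub>\<close> as a combination of
  \<open>Z\<^bsub>E - Y'\<^esub>\<close> with \<open>Y' = Y - f + e\<close> for edges \<open>f > e\<close> of the path; each such \<open>Y'\<close> is still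
  connected and has smaller total lexicographic rank. Otherwise \<open>Y = T \<union> act(T)\<close> for the
  spanning tree \<open>T\<close> produced from \<open>Y\<close> by Kruskal's algorithm in decreasing lexicographic
  order.\<close>

interpretation mpoly: module "\<lambda>c (p::'a::comm_ring_1 mpoly). const c * p"
  by standard (auto simp: const_def single_add distrib_left distrib_right mult_single mult.assoc[symmetric])

lemma lin_span_eq_span: "lin_span A = mpoly.span A"
  unfolding lin_span_def mpoly.span_explicit by auto

definition conn :: "(nat \<times> nat) set \<Rightarrow> nat \<Rightarrow> nat \<Rightarrow> bool" where
  "conn F u w \<longleftrightarrow> (u, w) \<in> (edge_rel F)\<^sup>*"

abbreviation adjacent :: "(nat \<times> nat) set \<Rightarrow> nat \<Rightarrow> nat \<Rightarrow> bool" where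
  "adjacent F u w \<equiv> (u, w) \<in> edge_rel F"

lemma adjacent_iff: "adjacent F u w \<longleftrightarrow> (u, w) \<in> F \<or> (w, u) \<in> F"
  unfolding edge_rel_def by auto

lemma connected_on_iff_conn: "connected_on V F \<longleftrightarrow> (\<forall>u\<in>V. \<forall>w\<in>V. conn F u w)"
  unfolding connected_on_def conn_def by simp

lemma conn_iff_path: "conn F u w \<longleftrightarrow> (\<exists>ys. rtrancl_path (adjacent F) u ys w)"
  unfolding conn_def using rtranclp_eq_rtrancl_path[of "adjacent F"]
  by (simp add: rtranclp_rtrancl_eq)

lemma conn_refl [simp]: "conn F u u"
  unfolding conn_def by simp

lemma conn_trans: "conn F u v \<Longrightarrow> conn F v w \<Longrightarrow> conn F u w"
  unfolding conn_def by (meson rtrancl_trans)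

lemma conn_sym: "conn F u w \<Longrightarrow> conn F w u"
proof -
  assume "conn F u w"
  then have "(w, u) \<in> (converse (edge_rel F))\<^sup>*"
    unfolding conn_def by (simp add: rtrancl_converseI)
  moreover have "converse (edge_rel F) = edge_rel F"
    unfolding edge_rel_def by auto
  ultimately show ?thesis
    unfolding conn_def by simp
qed

lemma conn_adjacent: "adjacent F u w \<Longrightarrow> conn F u w"
  unfolding conn_def by auto

lemma conn_edge: "g \<in> F \<Longrightarrow> conn F (fst g) (snd g)"
  by (cases g) (auto simp: conn_def edge_rel_def)

lemma conn_edge_ends: "g \<in> F \<Longrightarrow> {fst g, snd g} = {u, w} \<Longrightarrow> conn F u w"
  by (auto simp: doubleton_eq_iff intro: conn_edge conn_sym)

lemma conn_mono: "F \<subseteq> G \<Longrightarrow> conn F u w \<Longrightarrow> conn G u w"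
  unfolding conn_def edge_rel_def by (meson Un_mono converse_mono rtrancl_mono subsetD)

lemma conn_via_edges:
  assumes edges: "\<And>f. f \<in> F \<Longrightarrow> conn G (fst f) (snd f)" and "conn F u w"
  shows "conn G u w"
proof -
  have "edge_rel F \<subseteq> (edge_rel G)\<^sup>*"
  proof
    fix x assume "x \<in> edge_rel F"
    then obtain f where "f \<in> F" "x = f \<or> x = prod.swap f"
      unfolding edge_rel_def by (cases x) force
    then show "x \<in> (edge_rel G)\<^sup>*"
      using edges[of f] conn_sym unfolding conn_def by (cases f) fastforce+
  qed
  then show ?thesis
    using \<open>conn F u w\<close> unfolding conn_def by (meson rtrancl_subset_rtrancl subsetD)
qed

lemma connected_on_exchange:
  assumes "connected_on V Y" "Y - {f} \<subseteq> Y'" "conn Y' (fst f) (snd f)"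
  shows "connected_on V Y'"
  unfolding connected_on_iff_conn
proof (intro ballI)
  fix u w assume "u \<in> V" "w \<in> V"
  then have "conn Y u w"
    using assms(1) by (simp add: connected_on_iff_conn)
  then show "conn Y' u w"
    by (rule conn_via_edges[rotated]) (use assms(2,3) conn_edge in blast)
qed

definition path_edges :: "(nat \<times> nat) set \<Rightarrow> nat list \<Rightarrow> (nat \<times> nat) set" where
  "path_edges F p = {f \<in> F. \<exists>(u, w) \<in> set (zip p (tl p)). f = (u, w) \<or> f = (w, u)}"

lemma path_edges_Cons_subset: "path_edges F (y # ys) \<subseteq> path_edges F (x # y # ys)"
  unfolding path_edges_def by fastforce

lemma telescope_path:
  assumes "rtrancl_path (adjacent F) a ys b"
  shows "(var a - var b) * R \<in> mpoly.span ((\<lambda>f. z_edge f * R) ` path_edges F (a # ys))"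
  using assms
proof (induction rule: rtrancl_path.induct)
  case (base x)
  then show ?case by (simp add: mpoly.span_zero)
next
  case (step x y ys z)
  let ?S = "(\<lambda>f. z_edge f * R) ` path_edges F (x # y # ys)"
  have "(var y - var z) * R \<in> mpoly.span ?S"
    using step.IH mpoly.span_mono[OF image_mono[OF path_edges_Cons_subset]] by blast
  moreover have "(var x - var y) * R \<in> mpoly.span ?S"
  proof (cases "(x, y) \<in> F")
    case True
    then have "z_edge (x, y) * R \<in> ?S"
      unfolding path_edges_def by force
    then show ?thesis by (simp add: z_edge_def mpoly.span_base)
  next
    case False
    then have "z_edge (y, x) * R \<in> ?S"
      using step.hyps(1) unfolding path_edges_def adjacent_iff by force
    then have "- (z_edge (y, x) * R) \<in> mpoly.span ?S"
      by (simp add: mpoly.span_neg mpoly.span_base)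
    then show ?thesis by (simp add: z_edge_def algebra_simps)
  qed
  moreover have "(var x - var z) * R = (var x - var y) * R + (var y - var z) * R"
    by (simp add: algebra_simps)
  ultimately show ?case
    by (metis mpoly.span_add)
qed

lemma path_avoiding_conn:
  assumes "rtrancl_path (adjacent F) y ys b" "x \<notin> set (y # ys)" "x \<in> {fst f, snd f}"
  shows "conn (F - {f}) y b"
  using assms
proof (induction rule: rtrancl_path.induct)
  case (step u v ys z)
  have "adjacent (F - {f}) u v"
    using step.hyps(1) step.prems by (cases f) (auto simp: adjacent_iff)
  then show ?case
    using step conn_adjacent conn_trans by (metis list.set_intros(2))
qed simp

lemma simple_path_remove_edge:
  assumes "rtrancl_path (adjacent F) a ys b" "distinct (a # ys)"
    and "(u, w) \<in> set (zip (a # ys) ys)" "f = (u, w) \<or> f = (w, u)"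
  shows "conn (F - {f}) a u \<and> conn (F - {f}) w b"
  using assms
proof (induction arbitrary: u w rule: rtrancl_path.induct)
  case (step x y ys z)
  show ?case
  proof (cases "(u, w) = (x, y)")
    case True
    then show ?thesis
      using path_avoiding_conn[OF step.hyps(2), of x f] step.prems by auto
  next
    case False
    then have uw: "(u, w) \<in> set (zip (y # ys) ys)"
      using step.prems(2) by auto
    then have "x \<noteq> u" "x \<noteq> w"
      using step.prems(1) by (auto dest: set_zip_leftD set_zip_rightD)
    then have "adjacent (F - {f}) x y"
      using step.hyps(1) step.prems(3) by (auto simp: adjacent_iff)
    moreover have "conn (F - {f}) y u \<and> conn (F - {f}) w z"
      using step.IH[OF _ uw step.prems(3)] step.prems(1) by simp
    ultimately show ?thesis
      using conn_adjacent conn_trans by blast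
  qed
qed simp

lemma simple_path_bypass:
  assumes "rtrancl_path (adjacent F) a ys b" "distinct (a # ys)" "f \<in> path_edges F (a # ys)"
  shows "conn (insert (a, b) (F - {f})) (fst f) (snd f)"
proof -
  obtain u w where uw: "(u, w) \<in> set (zip (a # ys) ys)" and f: "f = (u, w) \<or> f = (w, u)"
    using assms(3) unfolding path_edges_def by auto
  have "conn (F - {f}) a u" "conn (F - {f}) w b"
    using simple_path_remove_edge[OF assms(1,2) uw f] by auto
  then have "conn (insert (a, b) (F - {f})) u a" "conn (insert (a, b) (F - {f})) b w"
    by (meson conn_mono conn_sym subset_insertI)+
  moreover have "conn (insert (a, b) (F - {f})) a b"
    using conn_edge[of "(a, b)"] by simp
  ultimately have "conn (insert (a, b) (F - {f})) u w"
    using conn_trans by blast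
  then show ?thesis
    using f conn_sym by auto
qed

lemma degree_sum_even:
  fixes F :: "(nat \<times> nat) set" and K :: "nat set"
  assumes "finite F" "finite K" "\<forall>g\<in>F. fst g \<noteq> snd g"
    and closed: "\<And>g. g \<in> F \<Longrightarrow> fst g \<in> K \<longleftrightarrow> snd g \<in> K"
  shows "even (\<Sum>v\<in>K. card {g\<in>F. fst g = v \<or> snd g = v})"
proof -
  have "(\<Sum>v\<in>K. card {g\<in>F. fst g = v \<or> snd g = v})
      = (\<Sum>v\<in>K. \<Sum>g\<in>F. if fst g = v \<or> snd g = v then 1 else 0)"
    using assms(1) by (simp add: sum.inter_filter[symmetric])
  also have "\<dots> = (\<Sum>g\<in>F. \<Sum>v\<in>K. if fst g = v \<or> snd g = v then 1 else 0)"
    by (rule sum.swap)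
  also have "\<dots> = (\<Sum>g\<in>F. card {v\<in>K. fst g = v \<or> snd g = v})"
    using assms(2) by (simp add: sum.inter_filter[symmetric])
  finally have double_count: "(\<Sum>v\<in>K. card {g\<in>F. fst g = v \<or> snd g = v})
      = (\<Sum>g\<in>F. card {v\<in>K. fst g = v \<or> snd g = v})" .
  have "even (card {v\<in>K. fst g = v \<or> snd g = v})" if "g \<in> F" for g
  proof (cases "fst g \<in> K")
    case True
    then have "{v\<in>K. fst g = v \<or> snd g = v} = {fst g, snd g}"
      using closed[OF that] by auto
    then show ?thesis
      using assms(3) that by simp
  next
    case False
    then have "{v\<in>K. fst g = v \<or> snd g = v} = {}"
      using closed[OF that] by auto
    then show ?thesis by (metis card.empty even_zero)
  qed
  then show ?thesis
    unfolding double_count by (simp add: dvd_sum)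
qed

text \<open>Parity argument: if the endpoints of \<open>e\<close> were not joined in \<open>C - {e}\<close>, the component of
  \<open>fst e\<close> in \<open>C - {e}\<close> would have odd degree sum, as \<open>fst e\<close> alone loses an edge.\<close>

lemma cycle_edge_conn:
  assumes cyc: "is_cycle C" and "e \<in> C" and loopless: "\<forall>g\<in>C. fst g \<noteq> snd g"
  shows "conn (C - {e}) (fst e) (snd e)"
proof (rule ccontr)
  assume not_conn: "\<not> ?thesis"
  define K where "K = {v \<in> edge_verts C. conn (C - {e}) (fst e) v}"
  have "finite C"
    using cyc is_cycle_def by auto
  then have "finite K"
    unfolding K_def edge_verts_def by auto
  have "fst e \<in> K"
    using \<open>e \<in> C\<close> unfolding K_def edge_verts_def by force
  have "snd e \<notin> K"
    using not_conn unfolding K_def by auto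
  have deg: "card {g\<in>C - {e}. fst g = v \<or> snd g = v} = (if v = fst e then 1 else 2)"
    if "v \<in> K" for v
  proof -
    have two: "card {g\<in>C. fst g = v \<or> snd g = v} = 2"
      using cyc that unfolding is_cycle_def K_def by auto
    show ?thesis
    proof (cases "v = fst e")
      case True
      then have "{g\<in>C - {e}. fst g = v \<or> snd g = v} = {g\<in>C. fst g = v \<or> snd g = v} - {e}"
        "e \<in> {g\<in>C. fst g = v \<or> snd g = v}"
        using \<open>e \<in> C\<close> by auto
      then show ?thesis
        using two True by (simp add: card_Diff_singleton)
    next
      case False
      then have "snd e \<noteq> v"
        using that \<open>snd e \<notin> K\<close> by auto
      then have "{g\<in>C - {e}. fst g = v \<or> snd g = v} = {g\<in>C. fst g = v \<or> snd g = v}"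
        using False by auto
      then show ?thesis
        using two False by simp
    qed
  qed
  have "(\<Sum>v\<in>K. card {g\<in>C - {e}. fst g = v \<or> snd g = v}) = (\<Sum>v\<in>K. if v = fst e then 1 else 2)"
    using deg by (rule sum.cong[OF refl])
  also have "\<dots> = 1 + (\<Sum>v\<in>K - {fst e}. if v = fst e then 1 else 2)"
    using \<open>finite K\<close> \<open>fst e \<in> K\<close> by (simp add: sum.remove)
  also have "(\<Sum>v\<in>K - {fst e}. if v = fst e then 1 else 2) = (\<Sum>v\<in>K - {fst e}. 2::nat)"
    by (rule sum.cong) auto
  finally have odd_sum: "odd (\<Sum>v\<in>K. card {g\<in>C - {e}. fst g = v \<or> snd g = v})"
    by simp
  have "fst g \<in> K \<longleftrightarrow> snd g \<in> K" if "g \<in> C - {e}" for g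
  proof -
    have "fst g \<in> edge_verts C" "snd g \<in> edge_verts C"
      using that unfolding edge_verts_def by auto
    moreover have "conn (C - {e}) (fst g) (snd g)" "conn (C - {e}) (snd g) (fst g)"
      using that by (auto intro: conn_edge conn_sym)
    ultimately show ?thesis
      unfolding K_def by (auto intro: conn_trans)
  qed
  then have "even (\<Sum>v\<in>K. card {g\<in>C - {e}. fst g = v \<or> snd g = v})"
    using \<open>finite C\<close> \<open>finite K\<close> loopless by (intro degree_sum_even) auto
  then show False
    using odd_sum by simp
qed

lemma closed_walk_is_cycle:
  fixes p :: "nat list" and g :: "nat \<Rightarrow> nat \<times> nat"
  assumes "distinct p" "3 \<le> length p"
    and ends: "\<And>i. i < length p \<Longrightarrow> {fst (g i), snd (g i)} = {p ! i, p ! (Suc i mod length p)}"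
  shows "is_cycle (g ` {..<length p})"
proof -
  define N where "N = length p"
  define C where "C = g ` {..<N}"
  define prev where "prev i = (if i = 0 then N - 1 else i - 1)" for i
  have "3 \<le> N"
    using assms(2) N_def by simp
  have succ_lt: "Suc i mod N < N" for i
    using \<open>3 \<le> N\<close> by simp
  have inj_p: "p ! i = p ! j \<longleftrightarrow> i = j" if "i < N" "j < N" for i j
    using nth_eq_iff_index_eq[OF assms(1)] that N_def by simp
  have incident: "fst (g j) = p ! i \<or> snd (g j) = p ! i \<longleftrightarrow> i = j \<or> i = Suc j mod N"
    if "i < N" "j < N" for i j
  proof -
    have "fst (g j) = p ! i \<or> snd (g j) = p ! i \<longleftrightarrow> p ! i \<in> {fst (g j), snd (g j)}"
      by auto
    also have "\<dots> \<longleftrightarrow> p ! i = p ! j \<or> p ! i = p ! (Suc j mod N)"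
      using ends[of j] that N_def by simp
    finally show ?thesis
      using inj_p succ_lt that by auto
  qed
  have succ_prev: "i = Suc j mod N \<longleftrightarrow> j = prev i" if "i < N" "j < N" for i j
    using that \<open>3 \<le> N\<close> unfolding prev_def by (auto simp: mod_Suc)
  have succ_succ: "Suc (Suc i mod N) mod N \<noteq> i" if "i < N" for i
    using that \<open>3 \<le> N\<close> by (auto simp: mod_Suc)
  have inj_g: "inj_on g {..<N}"
  proof (rule inj_onI, rule ccontr)
    fix i j assume ij: "i \<in> {..<N}" "j \<in> {..<N}" "g i = g j" "i \<noteq> j"
    have "i = Suc j mod N"
      using incident[of i i] incident[of i j] ij by auto
    moreover have "j = Suc i mod N"
      using incident[of j j] incident[of j i] ij by auto
    ultimately show False
      using succ_succ ij(1) by (metis lessThan_iff)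
  qed
  have verts: "edge_verts C = set p"
  proof
    show "edge_verts C \<subseteq> set p"
    proof
      fix v assume "v \<in> edge_verts C"
      then obtain j where "j < N" "v \<in> {fst (g j), snd (g j)}"
        unfolding edge_verts_def C_def by auto
      then show "v \<in> set p"
        using ends[of j] succ_lt N_def by auto
    qed
    show "set p \<subseteq> edge_verts C"
    proof
      fix v assume "v \<in> set p"
      then obtain i where "i < N" "v = p ! i"
        by (auto simp: in_set_conv_nth N_def)
      then have "v \<in> {fst (g i), snd (g i)}"
        using ends[of i] N_def by auto
      then show "v \<in> edge_verts C"
        using \<open>i < N\<close> unfolding edge_verts_def C_def by auto
    qed
  qed
  have conn_start: "conn C (p ! 0) (p ! i)" if "i < N" for i
    using that
  proof (induction i)
    case (Suc i)
    have "{fst (g i), snd (g i)} = {p ! i, p ! Suc i}"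
      using ends[of i] Suc.prems N_def by simp
    then have "conn C (p ! i) (p ! Suc i)"
      using Suc.prems unfolding C_def by (intro conn_edge_ends) auto
    then show ?case
      using Suc conn_trans by simp
  qed simp
  have "connected_on (edge_verts C) C"
    unfolding connected_on_iff_conn verts
  proof (intro ballI)
    fix u w assume "u \<in> set p" "w \<in> set p"
    then obtain i j where "i < N" "j < N" "u = p ! i" "w = p ! j"
      by (auto simp: in_set_conv_nth N_def)
    then show "conn C u w"
      using conn_start conn_sym conn_trans by metis
  qed
  moreover have "card {h\<in>C. fst h = v \<or> snd h = v} = 2" if v: "v \<in> edge_verts C" for v
  proof -
    obtain i where i: "i < N" "v = p ! i"
      using v verts by (auto simp: in_set_conv_nth N_def)
    have "prev i < N" "prev i \<noteq> i"
      using i \<open>3 \<le> N\<close> unfolding prev_def by auto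
    have "{h\<in>C. fst h = v \<or> snd h = v} = g ` {j. j < N \<and> (fst (g j) = v \<or> snd (g j) = v)}"
      unfolding C_def by blast
    also have "{j. j < N \<and> (fst (g j) = v \<or> snd (g j) = v)} = {i, prev i}"
      using incident[OF i(1)] succ_prev[OF i(1)] i \<open>prev i < N\<close> by auto
    moreover have "g i \<noteq> g (prev i)"
      using inj_g i(1) \<open>prev i < N\<close> \<open>prev i \<noteq> i\<close> by (metis inj_onD lessThan_iff)
    ultimately show ?thesis
      by simp
  qed
  moreover have "g 0 \<in> C" "finite C"
    using \<open>3 \<le> N\<close> unfolding C_def by auto
  ultimately show ?thesis
    unfolding is_cycle_def C_def N_def by blast
qed

lemma simple_path_closing_cycle:
  assumes path: "rtrancl_path (adjacent F) a ys b" and "distinct (a # ys)"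
    and "a \<noteq> b" and "\<not> adjacent F a b"
  shows "\<exists>C \<subseteq> insert (a, b) F. is_cycle C \<and> (a, b) \<in> C"
proof -
  define p where "p = a # ys"
  define k where "k = length ys"
  have "ys \<noteq> []"
    using path \<open>a \<noteq> b\<close> by (auto elim: rtrancl_path.cases)
  then have p_k: "p ! k = b"
    using rtrancl_path_last[OF path] unfolding p_def k_def by (simp add: last_conv_nth)
  have "\<forall>i<k. \<exists>h\<in>F. {fst h, snd h} = {p ! i, p ! Suc i}"
  proof (intro allI impI)
    fix i assume "i < k"
    then have "adjacent F (p ! i) (p ! Suc i)"
      using rtrancl_path_nth[OF path] unfolding p_def k_def by simp
    then show "\<exists>h\<in>F. {fst h, snd h} = {p ! i, p ! Suc i}"
      unfolding adjacent_iff by force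
  qed
  then obtain f where f: "\<And>i. i < k \<Longrightarrow> f i \<in> F \<and> {fst (f i), snd (f i)} = {p ! i, p ! Suc i}"
    by metis
  have "k \<noteq> 1"
  proof
    assume "k = 1"
    then have "f 0 \<in> F" "{fst (f 0), snd (f 0)} = {a, b}"
      using f[of 0] p_k unfolding p_def by auto
    then show False
      using \<open>\<not> adjacent F a b\<close> unfolding adjacent_iff
      by (metis doubleton_eq_iff prod.collapse)
  qed
  then have "3 \<le> length p"
    using \<open>ys \<noteq> []\<close> unfolding p_def k_def by (cases ys) (auto simp: Suc_le_eq)
  define g where "g i = (if i < k then f i else (a, b))" for i
  have "is_cycle (g ` {..<length p})"
  proof (rule closed_walk_is_cycle)
    show "distinct p"
      using assms(2) p_def by simp
    show "3 \<le> length p" by fact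
    fix i assume "i < length p"
    then consider "i < k" | "i = k"
      unfolding p_def k_def by force
    then show "{fst (g i), snd (g i)} = {p ! i, p ! (Suc i mod length p)}"
    proof cases
      case 1
      then show ?thesis
        using f[of i] unfolding g_def p_def k_def by simp
    next
      case 2
      then show ?thesis
        using p_k unfolding g_def p_def k_def by auto
    qed
  qed
  moreover have "g ` {..<length p} \<subseteq> insert (a, b) F"
    using f unfolding g_def by auto
  moreover have "(a, b) \<in> g ` {..<length p}"
    unfolding g_def p_def k_def by force
  ultimately show ?thesis
    by blast
qed

lemma lex_le_iff_le: "lex_le e f \<longleftrightarrow> e \<le> f"
  by (cases e; cases f) (auto simp: lex_le_def)

definition upper_spanned :: "(nat \<times> nat) set \<Rightarrow> nat \<times> nat \<Rightarrow> bool" where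
  "upper_spanned Y e \<longleftrightarrow> conn (Y \<inter> {e<..}) (fst e) (snd e)"

lemma upper_spanned_mono: "Y \<subseteq> Y' \<Longrightarrow> upper_spanned Y e \<Longrightarrow> upper_spanned Y' e"
  unfolding upper_spanned_def by (meson Int_mono conn_mono order_refl)

lemma act_eq_upper_spanned:
  assumes oriented: "\<forall>g\<in>E. fst g < snd g" and "T \<subseteq> E"
  shows "act E T = {e \<in> E - T. upper_spanned T e}"
proof (intro set_eqI iffI)
  fix e assume "e \<in> act E T"
  then obtain C where e: "e \<in> E" "e \<notin> T" and C: "C \<subseteq> T \<union> {e}" "is_cycle C" "e \<in> C"
    and e_min: "\<forall>f\<in>C. e \<le> f"
    unfolding act_def ext_active_def lex_le_iff_le by blast
  have "conn (C - {e}) (fst e) (snd e)"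
    using cycle_edge_conn[OF C(2,3)] C(1) oriented e(1) \<open>T \<subseteq> E\<close> by fastforce
  moreover have "C - {e} \<subseteq> T \<inter> {e<..}"
    using C(1) e_min by fastforce
  ultimately show "e \<in> {e \<in> E - T. upper_spanned T e}"
    unfolding upper_spanned_def using e conn_mono by blast
next
  fix e assume "e \<in> {e \<in> E - T. upper_spanned T e}"
  then have e: "e \<in> E" "e \<notin> T" and "conn (T \<inter> {e<..}) (fst e) (snd e)"
    unfolding upper_spanned_def by auto
  then obtain ys where path: "rtrancl_path (adjacent (T \<inter> {e<..})) (fst e) ys (snd e)"
    and simple: "distinct (fst e # ys)"
    using conn_iff_path rtrancl_path_distinct by metis
  have "fst e \<noteq> snd e"
    using oriented e(1) by fastforce
  have "(snd e, fst e) \<notin> T"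
    using oriented e(1) \<open>T \<subseteq> E\<close> by (metis fst_conv less_asym snd_conv subsetD)
  moreover have "(fst e, snd e) \<notin> T"
    using e(2) by simp
  ultimately have "\<not> adjacent (T \<inter> {e<..}) (fst e) (snd e)"
    unfolding adjacent_iff by blast
  then have "\<exists>C \<subseteq> insert (fst e, snd e) (T \<inter> {e<..}). is_cycle C \<and> (fst e, snd e) \<in> C"
    using simple_path_closing_cycle[OF path simple \<open>fst e \<noteq> snd e\<close>] by blast
  then obtain C where C: "C \<subseteq> insert e (T \<inter> {e<..})" "is_cycle C" "e \<in> C"
    by auto
  then have "C \<subseteq> T \<union> {e}" "\<forall>f\<in>C. lex_le e f"
    unfolding lex_le_iff_le by auto
  then show "e \<in> act E T"
    unfolding act_def ext_active_def using e C by blast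
qed

text \<open>Kruskal's algorithm run on \<open>Y\<close> in decreasing lexicographic order keeps exactly the
  edges whose endpoints are not yet joined by larger edges.\<close>

definition lex_forest :: "(nat \<times> nat) set \<Rightarrow> (nat \<times> nat) set" where
  "lex_forest Y = {e \<in> Y. \<not> upper_spanned Y e}"

lemma lex_forest_subset: "lex_forest Y \<subseteq> Y"
  unfolding lex_forest_def by auto

lemma lex_forest_conn_above:
  assumes "finite Y" "g \<in> Y"
  shows "conn (lex_forest Y \<inter> {g..}) (fst g) (snd g)"
  using assms(2)
proof (induction g rule: measure_induct_rule[of "\<lambda>g. card (Y \<inter> {g<..})"])
  case (less g)
  show ?case
  proof (cases "g \<in> lex_forest Y")
    case True
    then show ?thesis
      using conn_edge[of g] by simp
  next
    case False
    then have "conn (Y \<inter> {g<..}) (fst g) (snd g)"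
      using less.prems unfolding lex_forest_def upper_spanned_def by auto
    then show ?thesis
    proof (rule conn_via_edges[rotated])
      fix f assume f: "f \<in> Y \<inter> {g<..}"
      then have "Y \<inter> {f<..} \<subset> Y \<inter> {g<..}"
        by auto
      then have "card (Y \<inter> {f<..}) < card (Y \<inter> {g<..})"
        using assms(1) by (simp add: psubset_card_mono)
      then have "conn (lex_forest Y \<inter> {f..}) (fst f) (snd f)"
        using less.IH f by blast
      moreover have "lex_forest Y \<inter> {f..} \<subseteq> lex_forest Y \<inter> {g..}"
        using f by auto
      ultimately show "conn (lex_forest Y \<inter> {g..}) (fst f) (snd f)"
        using conn_mono by blast
    qed
  qed
qed

lemma upper_spanned_lex_forest:
  assumes "finite Y" "upper_spanned Y e"
  shows "upper_spanned (lex_forest Y) e"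
  unfolding upper_spanned_def
proof (rule conn_via_edges)
  fix f assume f: "f \<in> Y \<inter> {e<..}"
  then have "conn (lex_forest Y \<inter> {f..}) (fst f) (snd f)"
    using lex_forest_conn_above assms(1) by blast
  moreover have "lex_forest Y \<inter> {f..} \<subseteq> lex_forest Y \<inter> {e<..}"
    using f by auto
  ultimately show "conn (lex_forest Y \<inter> {e<..}) (fst f) (snd f)"
    using conn_mono by blast
qed (use assms(2) upper_spanned_def in simp)

lemma lex_forest_connected:
  assumes "finite Y" "connected_on V Y"
  shows "connected_on V (lex_forest Y)"
  unfolding connected_on_iff_conn
proof (intro ballI)
  fix u w assume "u \<in> V" "w \<in> V"
  then have "conn Y u w"
    using assms(2) by (simp add: connected_on_iff_conn)
  then show "conn (lex_forest Y) u w"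
    by (rule conn_via_edges[rotated])
      (meson assms(1) lex_forest_conn_above conn_mono inf_le1)
qed

lemma lex_forest_acyclic:
  assumes "\<forall>g\<in>Y. fst g \<noteq> snd g"
  shows "acyclic_edges (lex_forest Y)"
  unfolding acyclic_edges_def
proof (intro allI impI notI)
  fix C assume C: "C \<subseteq> lex_forest Y" "is_cycle C"
  then have "finite C" "C \<noteq> {}"
    unfolding is_cycle_def by auto
  define e where "e = Min C"
  have "e \<in> C"
    unfolding e_def using \<open>finite C\<close> \<open>C \<noteq> {}\<close> by (rule Min_in)
  have "e < f" if "f \<in> C - {e}" for f
    using that Min_le[OF \<open>finite C\<close>, of f] unfolding e_def by force
  then have "C - {e} \<subseteq> Y \<inter> {e<..}"
    using C(1) lex_forest_subset by fastforce
  moreover have "conn (C - {e}) (fst e) (snd e)"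
    using cycle_edge_conn[OF C(2) \<open>e \<in> C\<close>] C(1) lex_forest_subset assms by blast
  ultimately have "upper_spanned Y e"
    unfolding upper_spanned_def using conn_mono by blast
  then show False
    using C(1) \<open>e \<in> C\<close> unfolding lex_forest_def by blast
qed

lemma lex_forest_spanning_tree:
  assumes "finite Y" "Y \<subseteq> E" "connected_on V Y" "\<forall>g\<in>E. fst g \<noteq> snd g"
  shows "spanning_tree V E (lex_forest Y)"
proof -
  have "lex_forest Y \<subseteq> E"
    using lex_forest_subset assms(2) by (rule subset_trans)
  moreover have "connected_on V (lex_forest Y)"
    using assms(1,3) by (rule lex_forest_connected)
  moreover have "acyclic_edges (lex_forest Y)"
    using assms(2,4) by (intro lex_forest_acyclic) blast
  ultimately show ?thesis
    unfolding spanning_tree_def by simp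
qed

lemma lex_forest_active_closure:
  assumes oriented: "\<forall>g\<in>E. fst g < snd g" and "finite Y" "Y \<subseteq> E"
    and unspanned: "\<And>e. e \<in> E - Y \<Longrightarrow> \<not> upper_spanned Y e"
  shows "lex_forest Y \<union> act E (lex_forest Y) = Y"
proof -
  have "lex_forest Y \<subseteq> E"
    using lex_forest_subset \<open>Y \<subseteq> E\<close> by blast
  with oriented have act: "act E (lex_forest Y) = {e \<in> E - lex_forest Y. upper_spanned (lex_forest Y) e}"
    by (rule act_eq_upper_spanned)
  have "e \<in> Y" if "e \<in> E" "upper_spanned (lex_forest Y) e" for e
    using that unspanned upper_spanned_mono[OF lex_forest_subset] by blast
  moreover have "upper_spanned (lex_forest Y) e" if "e \<in> Y - lex_forest Y" for e
    using that \<open>finite Y\<close> upper_spanned_lex_forest unfolding lex_forest_def by blast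
  ultimately show ?thesis
    unfolding act using lex_forest_subset \<open>Y \<subseteq> E\<close> by blast
qed

lemma Z_insert: "finite H \<Longrightarrow> f \<notin> H \<Longrightarrow> Z (insert f H) = z_edge f * Z H"
  unfolding Z_def by simp

lemma exchange_span:
  assumes "finite E" "Y \<subseteq> E" "e \<in> E" "e \<notin> Y" "upper_spanned Y e"
  shows "Z (E - Y) \<in> (mpoly.span {Z (E - insert e (Y - {f})) | f.
            f \<in> Y \<and> e < f \<and> conn (insert e (Y - {f})) (fst f) (snd f)} :: 'a::comm_ring_1 mpoly set)"
proof -
  define F where "F = Y \<inter> {e<..}"
  define R :: "'a mpoly" where "R = Z (E - Y - {e})"
  obtain ys where path: "rtrancl_path (adjacent F) (fst e) ys (snd e)"
    and simple: "distinct (fst e # ys)"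
    using assms(5) conn_iff_path rtrancl_path_distinct unfolding upper_spanned_def F_def by metis
  have "E - Y = insert e (E - Y - {e})"
    using assms(3,4) by auto
  then have "Z (E - Y) = (var (fst e) - var (snd e)) * R"
    using Z_insert[of "E - Y - {e}" e] \<open>finite E\<close> unfolding R_def z_edge_def by simp
  also have "\<dots> \<in> mpoly.span ((\<lambda>f. z_edge f * R) ` path_edges F (fst e # ys))"
    by (rule telescope_path[OF path])
  also have "\<dots> \<subseteq> mpoly.span {Z (E - insert e (Y - {f})) | f.
            f \<in> Y \<and> e < f \<and> conn (insert e (Y - {f})) (fst f) (snd f)}"
  proof (rule mpoly.span_mono, rule image_subsetI)
    fix f assume f: "f \<in> path_edges F (fst e # ys)"
    then have "f \<in> Y" "e < f"
      unfolding path_edges_def F_def by auto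
    have "conn (insert (fst e, snd e) (F - {f})) (fst f) (snd f)"
      by (rule simple_path_bypass[OF path simple f])
    then have "conn (insert e (Y - {f})) (fst f) (snd f)"
      by (rule conn_mono[rotated]) (auto simp: F_def)
    moreover have "E - insert e (Y - {f}) = insert f (E - Y - {e})"
      using \<open>f \<in> Y\<close> \<open>e < f\<close> assms(2) by auto
    then have "Z (E - insert e (Y - {f})) = z_edge f * R"
      using Z_insert[of "E - Y - {e}" f] \<open>finite E\<close> \<open>f \<in> Y\<close> unfolding R_def by simp
    ultimately show "z_edge f * R \<in> {Z (E - insert e (Y - {f})) | f.
            f \<in> Y \<and> e < f \<and> conn (insert e (Y - {f})) (fst f) (snd f)}"
      using \<open>f \<in> Y\<close> \<open>e < f\<close> by (metis (mono_tags, lifting) mem_Collect_eq)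
  qed
  finally show ?thesis .
qed

lemma card_below_strict_mono:
  fixes E :: "'a::preorder set"
  assumes "finite E" "e \<in> E" "e < f"
  shows "card (E \<inter> {..<e}) < card (E \<inter> {..<f})"
proof (rule psubset_card_mono)
  show "finite (E \<inter> {..<f})"
    using assms(1) by simp
  show "E \<inter> {..<e} \<subset> E \<inter> {..<f}"
    using assms(2,3) less_trans by auto
qed

lemma rank_sum_exchange_less:
  fixes E :: "'a::preorder set"
  assumes "finite E" "finite Y" "e \<in> E" "e \<notin> Y" "f \<in> Y" "e < f"
  shows "(\<Sum>g\<in>insert e (Y - {f}). card (E \<inter> {..<g})) < (\<Sum>g\<in>Y. card (E \<inter> {..<g}))"
proof -
  have "(\<Sum>g\<in>insert e (Y - {f}). card (E \<inter> {..<g}))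
      = (\<Sum>g\<in>Y - {f}. card (E \<inter> {..<g})) + card (E \<inter> {..<e})"
    using assms(2,4) by simp
  also have "\<dots> < (\<Sum>g\<in>Y - {f}. card (E \<inter> {..<g})) + card (E \<inter> {..<f})"
    using card_below_strict_mono[OF assms(1,3,6)] by simp
  also have "\<dots> = (\<Sum>g\<in>Y. card (E \<inter> {..<g}))"
    using assms(2,5) by (simp add: sum.remove)
  finally show ?thesis .
qed

lemma Z_complement_in_span:
  assumes "finite E" and oriented: "\<forall>g\<in>E. fst g < snd g"
    and "Y \<subseteq> E" "connected_on V Y"
  shows "Z (E - Y) \<in> (mpoly.span {Z (E - (T \<union> act E T)) | T. spanning_tree V E T}
           :: 'a::comm_ring_1 mpoly set)"
  using assms(3,4)
proof (induction "\<Sum>g\<in>Y. card (E \<inter> {..<g})" arbitrary: Y rule: less_induct)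
  case less
  let ?B = "{Z (E - (T \<union> act E T)) | T. spanning_tree V E T} :: 'a mpoly set"
  have "finite Y"
    using less.prems(1) \<open>finite E\<close> finite_subset by blast
  show ?case
  proof (cases "\<exists>e \<in> E - Y. upper_spanned Y e")
    case True
    then obtain e where e: "e \<in> E" "e \<notin> Y" "upper_spanned Y e"
      by blast
    have "{Z (E - insert e (Y - {f})) | f. f \<in> Y \<and> e < f \<and> conn (insert e (Y - {f})) (fst f) (snd f)}
        \<subseteq> mpoly.span ?B"
    proof clarify
      fix f assume f: "f \<in> Y" "e < f" "conn (insert e (Y - {f})) (fst f) (snd f)"
      have smaller: "(\<Sum>g\<in>insert e (Y - {f}). card (E \<inter> {..<g})) < (\<Sum>g\<in>Y. card (E \<inter> {..<g}))"
        using rank_sum_exchange_less[OF \<open>finite E\<close> \<open>finite Y\<close> e(1,2) f(1,2)] .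
      have "insert e (Y - {f}) \<subseteq> E"
        using e(1) less.prems(1) by blast
      moreover have "connected_on V (insert e (Y - {f}))"
        using less.prems(2) _ f(3) by (rule connected_on_exchange) blast
      ultimately show "Z (E - insert e (Y - {f})) \<in> mpoly.span ?B"
        by (rule less.hyps[OF smaller])
    qed
    then have "mpoly.span {Z (E - insert e (Y - {f})) | f.
        f \<in> Y \<and> e < f \<and> conn (insert e (Y - {f})) (fst f) (snd f)} \<subseteq> mpoly.span ?B"
      by (rule mpoly.span_minimal[OF _ mpoly.subspace_span])
    then show ?thesis
      using exchange_span[OF \<open>finite E\<close> less.prems(1) e] by blast
  next
    case False
    have "\<forall>g\<in>E. fst g \<noteq> snd g"
      using oriented by fastforce
    then have "spanning_tree V E (lex_forest Y)"
      using lex_forest_spanning_tree \<open>finite Y\<close> less.prems by blast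
    moreover have "lex_forest Y \<union> act E (lex_forest Y) = Y"
      using lex_forest_active_closure[OF oriented \<open>finite Y\<close> less.prems(1)] False by blast
    ultimately have "Z (E - Y) \<in> ?B"
      by (metis (mono_tags, lifting) mem_Collect_eq)
    then show ?thesis
      by (rule mpoly.span_base)
  qed
qed

lemma span_active_complements_eq_S_G:
  assumes "finite E" "\<forall>g\<in>E. fst g < snd g"
  shows "lin_span {Z (E - (T \<union> act E T)) | T. spanning_tree V E T}
           = (S_G V E :: 'a::comm_ring_1 mpoly set)"
proof -
  let ?B = "{Z (E - (T \<union> act E T)) | T. spanning_tree V E T} :: 'a mpoly set"
  have "?B \<subseteq> {Z H | H. slim V E H}"
  proof clarify
    fix T assume "spanning_tree V E T"
    then have "T \<subseteq> E - (E - (T \<union> act E T))" "connected_on V T"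
      unfolding spanning_tree_def by auto
    then have "slim V E (E - (T \<union> act E T))"
      unfolding slim_def connected_on_iff_conn using conn_mono by blast
    then show "\<exists>H. Z (E - (T \<union> act E T)) = Z H \<and> slim V E H"
      by blast
  qed
  moreover have "{Z H | H. slim V E H} \<subseteq> mpoly.span ?B"
  proof clarify
    fix H assume "slim V E H"
    then have "H = E - (E - H)" "E - H \<subseteq> E" "connected_on V (E - H)"
      unfolding slim_def by auto
    then show "(Z H :: 'a mpoly) \<in> mpoly.span ?B"
      using Z_complement_in_span[OF assms, of "E - H" V] by simp
  qed
  ultimately have "mpoly.span ?B = mpoly.span {Z H | H. slim V E H}"
    by (intro antisym mpoly.span_mono mpoly.span_minimal[OF _ mpoly.subspace_span])
  then show ?thesis
    unfolding lin_span_eq_span S_G_def .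
qed

theorem mainTheorem3:
  fixes n m :: nat and t :: "nat \<Rightarrow> nat"
  assumes "t ` {1..n} = {1..m}"
  defines "E \<equiv> tiered_edges n t"
  shows "lin_span {Z (E - (T \<union> act E T)) | T. spanning_tree {1..n} E T}
           = (S_G {1..n} E :: 'a::field_char_0 mpoly set)"
proof (rule span_active_complements_eq_S_G)
  have "E \<subseteq> {1..n} \<times> {1..n}"
    unfolding E_def tiered_edges_def by auto
  then show "finite E"
    by (rule finite_subset) simp
  show "\<forall>g\<in>E. fst g < snd g"
    unfolding E_def tiered_edges_def by auto
qed

end
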